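(* Let $S$ be a nonempty set, $G$ a group of permutations of $S$, and $s\in S$. Then $SV_G$ is generated by $SV\cup\iota_1^s(G)$.
   Context: Let $\mathfrak C=\{0,1\}^{\omega}$ be the Cantor set, $S$ a nonempty set, and $G$ a subgroup of the symmetric group of $S$. Let $\mathfrak C^S$ be the space of all functions $S\to\mathfrak C$ with the product topology. For a function $\psi\colon S\to\{0,1\}^*$ with $\psi(s)=\varnothing$ for all but finitely many $s$, the dyadic brick $B(\psi)$ is the set of $\kappa\in\mathfrak C^S$ such that $\psi(s)$ is a prefix of $\kappa(s)$ for all $s\in S$; the canonical homeomorphism $\Phi_\psi\colon\mathfrak C^S\to B(\psi)$ is $\Phi_\psi(\kappa)(s)=\psi(s)\cdot\kappa(s)$. For $\gamma\in G$ let $\tau_\gamma(\kappa)(s)=\kappa(\gamma^{-1}s)$. The twist homeomorphism $B(\varphi)\to B(\psi)$ associated to $\gamma$ is $\Phi_\psi\circ\tau_\gamma\circ\Phi_\varphi^{-1}$. The twisted Brin–Thompson group $SV_G$ is the group of all homeomorphisms $h$ of $\mathfrak C^S$ for which there exist two partitions $B(\varphi_1),\dots,B(\varphi_n)$ and $B(\psi_1),\dots,B(\psi_n)$ of $\mathfrak C^S$ into dyadic bricks and $\gamma_1,\dots,\gamma_n\in G$ such that $h|_{B(\varphi_i)}$ is the twist homeomorphism $B(\varphi_i)\to B(\psi_i)$ associated to $\gamma_i$. $SV$ denotes the subgroup obtained when all $\gamma_i$ are required to be trivial (the Brin–Thompson group). For $s\in S$ let $\psi_s\colon S\to\{0,1\}^*$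 be given by $\psi_s(s)=1$ and $\psi_s(t)=\varnothing$ for $t\neq s$, and define $\iota_1^s\colon G\to SV_G$ by letting $\iota_1^s(\gamma)$ be the identity on $\{\kappa:\kappa(s)\text{ begins with }0\}$ and equal to $\Phi_{\psi_s}\circ\tau_\gamma\circ\Phi_{\psi_s}^{-1}$ on $B(\psi_s)$. *)

theory Defs
  imports "HOL-Analysis.Analysis" "HOL-Algebra.Bij" "HOL-Algebra.Generated_Groups"
begin

text \<open>The Cantor set C = {0,1}^omega, points are bool sequences (False = 0, True = 1),
  with the product of discrete topologies. Points of C^S are functions S => C; the set S
  is the (nonempty) universe of the type variable 'a.\<close>

definition cantor_top :: "(nat \<Rightarrow> bool) topology" where
  "cantor_top = product_topology (\<lambda>_. discrete_topology (UNIV :: bool set)) UNIV"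

definition cube_top :: "('a \<Rightarrow> nat \<Rightarrow> bool) topology" where
  "cube_top = product_topology (\<lambda>_. cantor_top) UNIV"

definition fin_supp :: "('a \<Rightarrow> bool list) \<Rightarrow> bool" where
  "fin_supp \<psi> \<longleftrightarrow> finite {s. \<psi> s \<noteq> []}"

definition is_prefix :: "bool list \<Rightarrow> (nat \<Rightarrow> bool) \<Rightarrow> bool" where
  "is_prefix w x \<longleftrightarrow> (\<forall>i<length w. x i = w ! i)"

definition brick :: "('a \<Rightarrow> bool list) \<Rightarrow> ('a \<Rightarrow> nat \<Rightarrow> bool) set" where
  "brick \<psi> = {\<kappa>. \<forall>s. is_prefix (\<psi> s) (\<kappa> s)}"

definition concat_seq :: "bool list \<Rightarrow> (nat \<Rightarrow> bool) \<Rightarrow> (nat \<Rightarrow> bool)" where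
  "concat_seq w x = (\<lambda>i. if i < length w then w ! i else x (i - length w))"

definition Phi :: "('a \<Rightarrow> bool list) \<Rightarrow> ('a \<Rightarrow> nat \<Rightarrow> bool) \<Rightarrow> ('a \<Rightarrow> nat \<Rightarrow> bool)" where
  "Phi \<psi> \<kappa> = (\<lambda>s. concat_seq (\<psi> s) (\<kappa> s))"

definition Phi_inv :: "('a \<Rightarrow> bool list) \<Rightarrow> ('a \<Rightarrow> nat \<Rightarrow> bool) \<Rightarrow> ('a \<Rightarrow> nat \<Rightarrow> bool)" where
  "Phi_inv \<psi> \<kappa> = (\<lambda>s i. \<kappa> s (i + length (\<psi> s)))"

definition tau :: "('a \<Rightarrow> 'a) \<Rightarrow> ('a \<Rightarrow> nat \<Rightarrow> bool) \<Rightarrow> ('a \<Rightarrow> nat \<Rightarrow> bool)" where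
  "tau \<gamma> \<kappa> = (\<lambda>s. \<kappa> (Hilbert_Choice.inv \<gamma> s))"

definition twist :: "('a \<Rightarrow> bool list) \<Rightarrow> ('a \<Rightarrow> bool list) \<Rightarrow> ('a \<Rightarrow> 'a)
    \<Rightarrow> ('a \<Rightarrow> nat \<Rightarrow> bool) \<Rightarrow> ('a \<Rightarrow> nat \<Rightarrow> bool)" where
  "twist \<phi> \<psi> \<gamma> = Phi \<psi> \<circ> tau \<gamma> \<circ> Phi_inv \<phi>"

definition brick_partition :: "(nat \<Rightarrow> 'a \<Rightarrow> bool list) \<Rightarrow> nat \<Rightarrow> bool" where
  "brick_partition \<phi> n \<longleftrightarrow>
     (\<forall>i<n. fin_supp (\<phi> i)) \<and>
     (\<forall>i<n. \<forall>j<n. i \<noteq> j \<longrightarrow> brick (\<phi> i) \<inter> brick (\<phi> j) = {}) \<and>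
     (\<Union>i<n. brick (\<phi> i)) = UNIV"

definition SVG :: "('a \<Rightarrow> 'a) set \<Rightarrow> (('a \<Rightarrow> nat \<Rightarrow> bool) \<Rightarrow> ('a \<Rightarrow> nat \<Rightarrow> bool)) set" where
  "SVG G = {h. homeomorphic_map cube_top cube_top h \<and>
     (\<exists>n \<phi> \<psi> \<gamma>. brick_partition \<phi> n \<and> brick_partition \<psi> n \<and> (\<forall>i<n. \<gamma> i \<in> G) \<and>
        (\<forall>i<n. \<forall>\<kappa>\<in>brick (\<phi> i). h \<kappa> = twist (\<phi> i) (\<psi> i) (\<gamma> i) \<kappa>))}"

definition SV :: "(('a \<Rightarrow> nat \<Rightarrow> bool) \<Rightarrow> ('a \<Rightarrow> nat \<Rightarrow> bool)) set" where
  "SV = SVG {id}"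

definition psi_s :: "'a \<Rightarrow> 'a \<Rightarrow> bool list" where
  "psi_s s = (\<lambda>t. if t = s then [True] else [])"

definition iota1 :: "'a \<Rightarrow> ('a \<Rightarrow> 'a) \<Rightarrow> ('a \<Rightarrow> nat \<Rightarrow> bool) \<Rightarrow> ('a \<Rightarrow> nat \<Rightarrow> bool)" where
  "iota1 s \<gamma> \<kappa> = (if \<kappa> s 0 = False then \<kappa>
                   else (Phi (psi_s s) \<circ> tau \<gamma> \<circ> Phi_inv (psi_s s)) \<kappa>)"

end

theory Submission
  imports Defs "HOL-Library.Sublist"
begin

text \<open>
  The inclusion \<open>\<supseteq>\<close> holds because \<open>SV\<^sub>G\<close> is a group containing \<open>SV\<close> and \<open>\<iota>\<^sub>1\<^sup>s(G)\<close>.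
  Closure is checked on descriptions of an element by finitely many pieces \<open>B(\<phi>) \<rightarrow> B(\<psi>)\<close>
  twisted by \<open>\<gamma>\<close>: swapping domains and targets describes the inverse, and the pieces of a
  composite are obtained by refining two overlapping middle bricks to their intersection,
  on which the two twists compose.

  For \<open>\<subseteq>\<close>, let \<open>h\<close> have pieces \<open>B(\<phi>\<^sub>i) \<rightarrow> B(\<psi>\<^sub>i)\<close> twisted by \<open>\<gamma>\<^sub>i\<close>, \<open>i < n\<close>. Then
  \<open>h = g \<circ> \<lambda>\<^sub>0 \<circ> \<dots> \<circ> \<lambda>\<^sub>n\<^sub>-\<^sub>1\<close>, where \<open>g \<in> SV\<close> maps each \<open>B(\<phi>\<^sub>i)\<close> onto \<open>B(\<psi>\<^sub>i)\<close> without twist and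
  \<open>\<lambda>\<^sub>i\<close> twists \<open>B(\<phi>\<^sub>i)\<close> by \<open>\<gamma>\<^sub>i\<close> and fixes its complement. For \<open>n \<ge> 2\<close> each \<open>\<lambda>\<^sub>i\<close> is conjugate to
  \<open>\<iota>\<^sub>1\<^sup>s(\<gamma>\<^sub>i)\<close> by an element of \<open>SV\<close> mapping the brick \<open>1\<close> in coordinate \<open>s\<close> onto \<open>B(\<phi>\<^sub>i)\<close> and the
  bricks \<open>01, 001, \<dots>, 0\<^sup>n\<^sup>-\<^sup>21, 0\<^sup>n\<^sup>-\<^sup>1\<close> onto the other \<open>B(\<phi>\<^sub>j)\<close>. A description by a single piece
  is first split into two.
\<close>

type_synonym 'a cube = "'a \<Rightarrow> nat \<Rightarrow> bool"

text \<open>HOL-Algebra reserves the name \<open>inv\<close> for group inverses.\<close>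
abbreviation inv_fun :: "('a \<Rightarrow> 'b) \<Rightarrow> 'b \<Rightarrow> 'a" where
  "inv_fun \<equiv> Hilbert_Choice.inv"

section \<open>Twists between bricks\<close>

lemma is_prefix_concat_seq: "is_prefix w (concat_seq w x)"
  by (simp add: is_prefix_def concat_seq_def)

lemma Phi_in_brick: "Phi \<psi> \<kappa> \<in> brick \<psi>"
  by (simp add: brick_def Phi_def is_prefix_concat_seq)

lemma Phi_inv_Phi [simp]: "Phi_inv \<psi> (Phi \<psi> \<kappa>) = \<kappa>"
  by (auto simp: Phi_inv_def Phi_def concat_seq_def)

lemma Phi_Phi_inv: "\<kappa> \<in> brick \<psi> \<Longrightarrow> Phi \<psi> (Phi_inv \<psi> \<kappa>) = \<kappa>"
  by (auto simp: Phi_inv_def Phi_def concat_seq_def brick_def is_prefix_def fun_eq_iff)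

lemma brick_nonempty: "brick \<phi> \<noteq> {}"
  using Phi_in_brick by blast

lemma brick_eq_UNIV_imp_Nil:
  assumes "brick \<phi> = UNIV"
  shows "\<phi> u = []"
proof (rule ccontr)
  assume "\<phi> u \<noteq> []"
  moreover have "(\<lambda>_ _. \<not> \<phi> u ! 0) \<in> brick \<phi>"
    using assms by simp
  ultimately show False
    by (auto simp: brick_def is_prefix_def)
qed

lemma twist_apply:
  "twist \<phi> \<psi> \<gamma> \<kappa> u i =
    (if i < length (\<psi> u) then \<psi> u ! i
     else \<kappa> (inv_fun \<gamma> u) (i - length (\<psi> u) + length (\<phi> (inv_fun \<gamma> u))))"
  by (simp add: twist_def Phi_def Phi_inv_def tau_def concat_seq_def)

lemma twist_in_brick: "twist \<phi> \<psi> \<gamma> \<kappa> \<in> brick \<psi>"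
  by (simp add: twist_def Phi_in_brick)

lemma twist_twist:
  assumes "bij \<gamma>" "bij \<delta>"
  shows "twist \<psi> \<rho> \<delta> (twist \<phi> \<psi> \<gamma> \<kappa>) = twist \<phi> \<rho> (\<delta> \<circ> \<gamma>) \<kappa>"
  using assms by (simp add: twist_def tau_def o_inv_distrib)

lemma twist_self_id: "\<kappa> \<in> brick \<phi> \<Longrightarrow> twist \<phi> \<phi> id \<kappa> = \<kappa>"
  by (simp add: twist_def tau_def Phi_Phi_inv)

lemma twist_inv_twist:
  assumes "bij \<gamma>" "\<kappa> \<in> brick \<phi>"
  shows "twist \<psi> \<phi> (inv_fun \<gamma>) (twist \<phi> \<psi> \<gamma> \<kappa>) = \<kappa>"
  using assms by (simp add: twist_twist bij_imp_bij_inv bij_is_inj twist_self_id)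

lemma image_twist:
  assumes "bij \<gamma>"
  shows "twist \<phi> \<psi> \<gamma> ` brick \<phi> = brick \<psi>"
proof
  show "brick \<psi> \<subseteq> twist \<phi> \<psi> \<gamma> ` brick \<phi>"
  proof
    fix y assume "y \<in> brick \<psi>"
    then have "y = twist \<phi> \<psi> (inv_fun (inv_fun \<gamma>)) (twist \<psi> \<phi> (inv_fun \<gamma>) y)"
      using assms by (simp add: twist_inv_twist bij_imp_bij_inv)
    then show "y \<in> twist \<phi> \<psi> \<gamma> ` brick \<phi>"
      using assms by (simp add: inv_inv_eq twist_in_brick)
  qed
qed (use twist_in_brick in blast)

lemma is_prefix_iff_map: "is_prefix w x \<longleftrightarrow> w = map x [0..<length w]"
  unfolding is_prefix_def list_eq_iff_nth_eq by auto

lemma is_prefix_imp_prefix: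
  assumes "is_prefix v x" "is_prefix w x" "length v \<le> length w"
  shows "prefix v w"
proof -
  have "take (length v) w = map x (take (length v) [0..<length w])"
    using assms(2) by (metis is_prefix_iff_map take_map)
  also have "\<dots> = map x [0..<length v]"
    using assms(3) by (simp add: min_def)
  also have "\<dots> = v"
    using assms(1) is_prefix_iff_map by metis
  finally show ?thesis
    by (metis take_is_prefix)
qed

lemma brick_antimono:
  assumes "\<And>u. prefix (\<phi> u) (\<theta> u)"
  shows "brick \<theta> \<subseteq> brick \<phi>"
proof
  fix \<kappa> assume "\<kappa> \<in> brick \<theta>"
  moreover have "i < length (\<phi> u) \<Longrightarrow> i < length (\<theta> u) \<and> \<theta> u ! i = \<phi> u ! i" for u i
    using assms[of u] by (auto simp: prefix_def nth_append)
  ultimately show "\<kappa> \<in> brick \<phi>"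
    by (auto simp: brick_def is_prefix_def)
qed

text \<open>If \<open>\<theta>\<close> refines \<open>\<phi>\<close>, then \<open>twist \<phi> \<psi> \<gamma>\<close> maps \<open>brick \<theta>\<close> onto \<open>brick (twist_label \<phi> \<psi> \<gamma> \<theta>)\<close>:
  the extra letters of \<open>\<theta>\<close> at coordinate \<open>t\<close> are carried to coordinate \<open>\<gamma> t\<close>.\<close>
definition twist_label ::
    "('a \<Rightarrow> bool list) \<Rightarrow> ('a \<Rightarrow> bool list) \<Rightarrow> ('a \<Rightarrow> 'a) \<Rightarrow> ('a \<Rightarrow> bool list) \<Rightarrow> 'a \<Rightarrow> bool list" where
  "twist_label \<phi> \<psi> \<gamma> \<theta> u = \<psi> u @ drop (length (\<phi> (inv_fun \<gamma> u))) (\<theta> (inv_fun \<gamma> u))"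

lemma prefix_twist_label: "prefix (\<psi> u) (twist_label \<phi> \<psi> \<gamma> \<theta> u)"
  by (simp add: twist_label_def)

lemma fin_supp_twist_label:
  assumes "fin_supp \<psi>" "fin_supp \<theta>" "bij \<gamma>"
  shows "fin_supp (twist_label \<phi> \<psi> \<gamma> \<theta>)"
proof -
  have "u \<in> {u. \<psi> u \<noteq> []} \<union> \<gamma> ` {t. \<theta> t \<noteq> []}" if "twist_label \<phi> \<psi> \<gamma> \<theta> u \<noteq> []" for u
  proof -
    have "\<psi> u \<noteq> [] \<or> \<theta> (inv_fun \<gamma> u) \<noteq> []"
      using that by (auto simp: twist_label_def)
    moreover have "\<gamma> (inv_fun \<gamma> u) = u"
      using assms(3) by (simp add: bij_is_surj surj_f_inv_f)
    ultimately show ?thesis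
      by (metis (mono_tags) Un_iff image_eqI mem_Collect_eq)
  qed
  then have "{u. twist_label \<phi> \<psi> \<gamma> \<theta> u \<noteq> []} \<subseteq> {u. \<psi> u \<noteq> []} \<union> \<gamma> ` {t. \<theta> t \<noteq> []}"
    by blast
  then show ?thesis
    using assms(1,2) unfolding fin_supp_def by (meson finite_UnI finite_imageI finite_subset)
qed

lemma twist_refine:
  assumes "\<And>u. prefix (\<phi> u) (\<theta> u)" "\<kappa> \<in> brick \<theta>"
  shows "twist \<phi> \<psi> \<gamma> \<kappa> = twist \<theta> (twist_label \<phi> \<psi> \<gamma> \<theta>) \<gamma> \<kappa>"
proof (intro ext)
  fix u i
  define t where "t = inv_fun \<gamma> u"
  define j where "j = i - length (\<psi> u) + length (\<phi> t)"
  obtain w where w: "\<theta> t = \<phi> t @ w"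
    using assms(1) by (auto simp: prefix_def)
  have label: "twist_label \<phi> \<psi> \<gamma> \<theta> u = \<psi> u @ w"
    by (simp add: twist_label_def t_def[symmetric] w)
  have lhs: "twist \<phi> \<psi> \<gamma> \<kappa> u i = (if i < length (\<psi> u) then \<psi> u ! i else \<kappa> t j)"
    by (simp add: twist_apply t_def j_def)
  have rhs: "twist \<theta> (twist_label \<phi> \<psi> \<gamma> \<theta>) \<gamma> \<kappa> u i =
      (if i < length (\<psi> u) + length w then (\<psi> u @ w) ! i else \<kappa> t j)"
    by (simp add: twist_apply label t_def[symmetric] w j_def)
  have "\<kappa> t j = w ! (i - length (\<psi> u))" if "\<not> i < length (\<psi> u)" "i < length (\<psi> u) + length w"
  proof -
    have j: "j = length (\<phi> t) + (i - length (\<psi> u))"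
      using that(1) by (simp add: j_def)
    have "j < length (\<theta> t)"
      using that by (simp add: j w)
    then have "\<kappa> t j = \<theta> t ! j"
      using assms(2) by (simp add: brick_def is_prefix_def)
    then show ?thesis
      by (simp add: w j)
  qed
  then show "twist \<phi> \<psi> \<gamma> \<kappa> u i = twist \<theta> (twist_label \<phi> \<psi> \<gamma> \<theta>) \<gamma> \<kappa> u i"
    unfolding lhs rhs nth_append by (cases "i < length (\<psi> u)") auto
qed

lemma twist_label_twist_label:
  assumes "bij \<gamma>" "\<And>u. prefix (\<psi> u) (\<theta> u)"
  shows "twist_label \<phi> \<psi> \<gamma> (twist_label \<psi> \<phi> (inv_fun \<gamma>) \<theta>) = \<theta>"
proof
  fix u
  have "inv_fun (inv_fun \<gamma>) (inv_fun \<gamma> u) = u"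
    using assms(1) by (simp add: inv_inv_eq bij_is_surj surj_f_inv_f)
  then show "twist_label \<phi> \<psi> \<gamma> (twist_label \<psi> \<phi> (inv_fun \<gamma>) \<theta>) u = \<theta> u"
    using assms(2)[of u] by (auto simp: twist_label_def prefix_def)
qed

lemma twist_preimage_brick:
  assumes "bij \<gamma>" "\<And>u. prefix (\<psi> u) (\<theta> u)"
  shows "{\<kappa> \<in> brick \<phi>. twist \<phi> \<psi> \<gamma> \<kappa> \<in> brick \<theta>} = brick (twist_label \<psi> \<phi> (inv_fun \<gamma>) \<theta>)"
    (is "?A = brick ?\<epsilon>")
proof
  have refines: "\<And>u. prefix (\<phi> u) (?\<epsilon> u)"
    by (rule prefix_twist_label)
  show "brick ?\<epsilon> \<subseteq> ?A"
  proof
    fix \<kappa> assume \<kappa>: "\<kappa> \<in> brick ?\<epsilon>"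
    then have "twist \<phi> \<psi> \<gamma> \<kappa> = twist ?\<epsilon> \<theta> \<gamma> \<kappa>"
      using twist_refine[OF refines \<kappa>] by (simp add: twist_label_twist_label[OF assms])
    moreover have "brick ?\<epsilon> \<subseteq> brick \<phi>"
      by (rule brick_antimono) (rule refines)
    ultimately show "\<kappa> \<in> ?A"
      using \<kappa> by (auto simp: twist_in_brick)
  qed
  show "?A \<subseteq> brick ?\<epsilon>"
  proof
    fix \<kappa> assume "\<kappa> \<in> ?A"
    then have "\<kappa> \<in> brick \<phi>" "twist \<phi> \<psi> \<gamma> \<kappa> \<in> brick \<theta>" by auto
    then have "\<kappa> = twist \<psi> \<phi> (inv_fun \<gamma>) (twist \<phi> \<psi> \<gamma> \<kappa>)"
      using assms(1) by (simp add: twist_inv_twist)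
    also have "\<dots> = twist \<theta> ?\<epsilon> (inv_fun \<gamma>) (twist \<phi> \<psi> \<gamma> \<kappa>)"
      using twist_refine[of \<psi> \<theta>, OF assms(2)] \<open>twist \<phi> \<psi> \<gamma> \<kappa> \<in> brick \<theta>\<close> by blast
    finally show "\<kappa> \<in> brick ?\<epsilon>"
      using twist_in_brick by metis
  qed
qed

definition brick_meet :: "('a \<Rightarrow> bool list) \<Rightarrow> ('a \<Rightarrow> bool list) \<Rightarrow> 'a \<Rightarrow> bool list" where
  "brick_meet \<phi> \<psi> u = (if length (\<phi> u) \<le> length (\<psi> u) then \<psi> u else \<phi> u)"

lemma fin_supp_brick_meet: "fin_supp \<phi> \<Longrightarrow> fin_supp \<psi> \<Longrightarrow> fin_supp (brick_meet \<phi> \<psi>)"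
  unfolding fin_supp_def
  by (rule finite_subset[of _ "{u. \<phi> u \<noteq> []} \<union> {u. \<psi> u \<noteq> []}"]) (auto simp: brick_meet_def)

lemma
  assumes "\<kappa> \<in> brick \<phi>" "\<kappa> \<in> brick \<psi>"
  shows prefix_brick_meet1: "prefix (\<phi> u) (brick_meet \<phi> \<psi> u)"
    and prefix_brick_meet2: "prefix (\<psi> u) (brick_meet \<phi> \<psi> u)"
    and brick_Int_brick: "brick \<phi> \<inter> brick \<psi> = brick (brick_meet \<phi> \<psi>)"
proof -
  have pre: "is_prefix (\<phi> u) (\<kappa> u)" "is_prefix (\<psi> u) (\<kappa> u)" for u
    using assms by (auto simp: brick_def)
  then show pfx1: "prefix (\<phi> u) (brick_meet \<phi> \<psi> u)" and pfx2: "prefix (\<psi> u) (brick_meet \<phi> \<psi> u)" for u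
    using is_prefix_imp_prefix[OF pre(1,2), of u] is_prefix_imp_prefix[OF pre(2,1), of u]
    by (auto simp: brick_meet_def)
  show "brick \<phi> \<inter> brick \<psi> = brick (brick_meet \<phi> \<psi>)"
  proof
    show "brick (brick_meet \<phi> \<psi>) \<subseteq> brick \<phi> \<inter> brick \<psi>"
      using brick_antimono pfx1 pfx2 by blast
    show "brick \<phi> \<inter> brick \<psi> \<subseteq> brick (brick_meet \<phi> \<psi>)"
      by (auto simp: brick_def brick_meet_def)
  qed
qed

definition partitions_cube :: "('i \<Rightarrow> 'a \<Rightarrow> bool list) \<Rightarrow> 'i set \<Rightarrow> bool" where
  "partitions_cube \<phi> I \<longleftrightarrow>
     (\<forall>i\<in>I. \<forall>j\<in>I. i \<noteq> j \<longrightarrow> brick (\<phi> i) \<inter> brick (\<phi> j) = {}) \<and> (\<Union>i\<in>I. brick (\<phi> i)) = UNIV"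

lemma brick_partition_iff:
  "brick_partition \<phi> n \<longleftrightarrow> (\<forall>i<n. fin_supp (\<phi> i)) \<and> partitions_cube \<phi> {..<n}"
  by (auto simp: brick_partition_def partitions_cube_def)

lemma partitions_cube_cover:
  assumes "partitions_cube \<phi> I"
  obtains i where "i \<in> I" "\<kappa> \<in> brick (\<phi> i)"
  using assms unfolding partitions_cube_def by blast

lemma partitions_cube_unique:
  assumes "partitions_cube \<phi> I" "i \<in> I" "j \<in> I" "\<kappa> \<in> brick (\<phi> i)" "\<kappa> \<in> brick (\<phi> j)"
  shows "i = j"
  using assms unfolding partitions_cube_def by blast

lemma partitions_cubeI:
  assumes "\<And>\<kappa>. \<exists>i\<in>I. \<kappa> \<in> brick (\<phi> i)"
    and "\<And>i j \<kappa>. i \<in> I \<Longrightarrow> j \<in> I \<Longrightarrow> \<kappa> \<in> brick (\<phi> i) \<Longrightarrow> \<kappa> \<in> brick (\<phi> j) \<Longrightarrow> i = j"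
  shows "partitions_cube \<phi> I"
  using assms unfolding partitions_cube_def by blast

lemma partitions_cube_inj:
  assumes "partitions_cube \<phi> I"
  shows "inj_on \<phi> I"
proof (rule inj_onI)
  fix i j assume ij: "i \<in> I" "j \<in> I" "\<phi> i = \<phi> j"
  obtain \<kappa> where "\<kappa> \<in> brick (\<phi> j)"
    using brick_nonempty by blast
  then show "i = j"
    using partitions_cube_unique[OF assms ij(1,2)] ij(3) by simp
qed

lemma partitions_cube_reindex:
  assumes "bij_betw r J I" "\<And>j. j \<in> J \<Longrightarrow> \<psi> j = \<phi> (r j)"
  shows "partitions_cube \<psi> J \<longleftrightarrow> partitions_cube \<phi> I"
proof -
  have I: "I = r ` J" and inj: "inj_on r J"
    using assms(1) by (auto simp: bij_betw_def)
  have "(\<Union>j\<in>J. brick (\<psi> j)) = (\<Union>i\<in>I. brick (\<phi> i))"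
    using assms(2) by (simp add: I)
  moreover have "(\<forall>j\<in>J. \<forall>j'\<in>J. j \<noteq> j' \<longrightarrow> brick (\<psi> j) \<inter> brick (\<psi> j') = {}) \<longleftrightarrow>
      (\<forall>i\<in>I. \<forall>i'\<in>I. i \<noteq> i' \<longrightarrow> brick (\<phi> i) \<inter> brick (\<phi> i') = {})"
    using assms(2) inj by (auto simp: I inj_on_eq_iff)
  ultimately show ?thesis
    by (simp add: partitions_cube_def)
qed

lemma partitions_cube_image:
  assumes "bij h" "partitions_cube \<phi> I" "\<And>i. i \<in> I \<Longrightarrow> h ` brick (\<phi> i) = brick (\<psi> i)"
  shows "partitions_cube \<psi> I"
proof (rule partitions_cubeI)
  fix \<kappa>
  obtain x where "\<kappa> = h x"
    using assms(1) by (metis bij_pointE)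
  moreover obtain i where "i \<in> I" "x \<in> brick (\<phi> i)"
    using assms(2) partitions_cube_cover by blast
  ultimately show "\<exists>i\<in>I. \<kappa> \<in> brick (\<psi> i)"
    using assms(3) by blast
next
  fix i j \<kappa> assume "i \<in> I" "j \<in> I" "\<kappa> \<in> brick (\<psi> i)" "\<kappa> \<in> brick (\<psi> j)"
  then obtain x y where "x \<in> brick (\<phi> i)" "y \<in> brick (\<phi> j)" "h x = \<kappa>" "h y = \<kappa>"
    using assms(3) by (metis imageE)
  then show "i = j"
    using partitions_cube_unique[OF assms(2) \<open>i \<in> I\<close> \<open>j \<in> I\<close>] assms(1)
    by (metis bij_is_inj inj_eq)
qed

lemma topspace_cube_top [simp]: "topspace cube_top = UNIV"
  by (simp add: cube_top_def cantor_top_def)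

lemma continuous_map_cube_coordinate:
  "continuous_map cube_top (discrete_topology UNIV) (\<lambda>\<kappa>. \<kappa> u i)"
proof -
  have "continuous_map cube_top cantor_top (\<lambda>\<kappa>. \<kappa> u)"
    unfolding cube_top_def by (rule continuous_map_product_projection) simp
  moreover have "continuous_map cantor_top (discrete_topology UNIV) (\<lambda>x. x i)"
    unfolding cantor_top_def by (rule continuous_map_product_projection) simp
  ultimately show ?thesis
    using continuous_map_compose by (fastforce simp: o_def)
qed

lemma continuous_map_into_cube:
  assumes "\<And>u i. continuous_map X (discrete_topology UNIV) (\<lambda>x. f x u i)"
  shows "continuous_map X cube_top f"
  unfolding cube_top_def cantor_top_def continuous_map_componentwise_UNIV
  using assms by simp

lemma continuous_map_twist: "continuous_map cube_top cube_top (twist \<phi> \<psi> \<gamma>)"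
  by (rule continuous_map_into_cube)
    (simp add: twist_apply continuous_map_cube_coordinate)

lemma openin_brick:
  assumes "fin_supp \<phi>"
  shows "openin cube_top (brick \<phi>)"
proof -
  define P where "P = (SIGMA u:{u. \<phi> u \<noteq> []}. {..<length (\<phi> u)})"
  have "brick \<phi> = topspace cube_top \<inter> \<Inter>((\<lambda>(u, i). {\<kappa>. \<kappa> u i = \<phi> u ! i}) ` P)"
    by (force simp: brick_def is_prefix_def P_def)
  also have "openin cube_top \<dots>"
  proof (rule openin_Int_Inter)
    show "finite ((\<lambda>(u, i). {\<kappa>. \<kappa> u i = \<phi> u ! i}) ` P)"
      using assms by (simp add: P_def fin_supp_def)
    have "openin cube_top {\<kappa>. \<kappa> u i = b}" for u i b
      using openin_continuous_map_preimage[OF continuous_map_cube_coordinate, of "{b}" u i] by simp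
    then show "\<And>X. X \<in> (\<lambda>(u, i). {\<kappa>. \<kappa> u i = \<phi> u ! i}) ` P \<Longrightarrow> openin cube_top X"
      by auto
  qed (rule openin_topspace)
  finally show ?thesis .
qed

lemma subgroup_BijGroup_UNIV_iff:
  "subgroup H (BijGroup UNIV) \<longleftrightarrow>
     (\<forall>f\<in>H. bij f) \<and> id \<in> H \<and> (\<forall>f\<in>H. \<forall>g\<in>H. f \<circ> g \<in> H) \<and> (\<forall>f\<in>H. inv_fun f \<in> H)"
proof -
  have carrier: "carrier (BijGroup UNIV) = {f. bij f}"
    by (simp add: BijGroup_def Bij_def bij_def)
  have one: "\<one>\<^bsub>BijGroup UNIV\<^esub> = id"
    by (simp add: BijGroup_def fun_eq_iff)
  have mult: "f \<otimes>\<^bsub>BijGroup UNIV\<^esub> g = f \<circ> g" if "bij f" "bij g" for f g :: "'a \<Rightarrow> 'a"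
    using that by (simp add: BijGroup_def Bij_def bij_def compose_def fun_eq_iff)
  have inv: "inv\<^bsub>BijGroup UNIV\<^esub> f = inv_fun f" if "bij f" for f :: "'a \<Rightarrow> 'a"
    using that by (simp add: inv_BijGroup Bij_def bij_def fun_eq_iff)
  show ?thesis
  proof
    assume "subgroup H (BijGroup UNIV)"
    then interpret subgroup H "BijGroup UNIV" .
    have "\<forall>f\<in>H. bij f"
      using subset carrier by blast
    then show "(\<forall>f\<in>H. bij f) \<and> id \<in> H \<and> (\<forall>f\<in>H. \<forall>g\<in>H. f \<circ> g \<in> H) \<and> (\<forall>f\<in>H. inv_fun f \<in> H)"
      using one_closed m_closed m_inv_closed by (simp add: one mult inv)
  next
    assume H: "(\<forall>f\<in>H. bij f) \<and> id \<in> H \<and> (\<forall>f\<in>H. \<forall>g\<in>H. f \<circ> g \<in> H) \<and> (\<forall>f\<in>H. inv_fun f \<in> H)"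
    show "subgroup H (BijGroup UNIV)"
      by unfold_locales (use H in \<open>auto simp: carrier one mult inv\<close>)
  qed
qed

lemma
  assumes "subgroup H (BijGroup UNIV)"
  shows subgroup_BijGroup_UNIV_bij: "f \<in> H \<Longrightarrow> bij f"
    and subgroup_BijGroup_UNIV_id: "id \<in> H"
    and subgroup_BijGroup_UNIV_comp: "f \<in> H \<Longrightarrow> g \<in> H \<Longrightarrow> f \<circ> g \<in> H"
    and subgroup_BijGroup_UNIV_inv: "f \<in> H \<Longrightarrow> inv_fun f \<in> H"
  using assms by (simp_all add: subgroup_BijGroup_UNIV_iff)

section \<open>Piecewise twists\<close>

text \<open>A piece \<open>(\<phi>, \<psi>, \<gamma>)\<close> stands for the twist homeomorphism \<open>brick \<phi> \<rightarrow> brick \<psi>\<close> associated to \<open>\<gamma>\<close>.\<close>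
type_synonym 'a piece = "('a \<Rightarrow> bool list) \<times> ('a \<Rightarrow> bool list) \<times> ('a \<Rightarrow> 'a)"

definition twist_pieces :: "('a \<Rightarrow> 'a) set \<Rightarrow> ('a cube \<Rightarrow> 'a cube) \<Rightarrow> 'a piece set \<Rightarrow> bool" where
  "twist_pieces G h T \<longleftrightarrow> finite T \<and> partitions_cube fst T \<and>
     (\<forall>(\<phi>, \<psi>, \<gamma>)\<in>T. fin_supp \<phi> \<and> fin_supp \<psi> \<and> \<gamma> \<in> G \<and> (\<forall>\<kappa>\<in>brick \<phi>. h \<kappa> = twist \<phi> \<psi> \<gamma> \<kappa>))"

lemma twist_piecesD:
  assumes "twist_pieces G h T"
  shows "finite T" "partitions_cube fst T"
    and "(\<phi>, \<psi>, \<gamma>) \<in> T \<Longrightarrow> fin_supp \<phi>" "(\<phi>, \<psi>, \<gamma>) \<in> T \<Longrightarrow> fin_supp \<psi>"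
    and "(\<phi>, \<psi>, \<gamma>) \<in> T \<Longrightarrow> \<gamma> \<in> G"
    and "(\<phi>, \<psi>, \<gamma>) \<in> T \<Longrightarrow> \<kappa> \<in> brick \<phi> \<Longrightarrow> h \<kappa> = twist \<phi> \<psi> \<gamma> \<kappa>"
  using assms by (fastforce simp: twist_pieces_def)+

lemma twist_pieces_cover:
  assumes "twist_pieces G h T"
  obtains \<phi> \<psi> \<gamma> where "(\<phi>, \<psi>, \<gamma>) \<in> T" "\<kappa> \<in> brick \<phi>"
proof -
  obtain t where "t \<in> T" "\<kappa> \<in> brick (fst t)"
    by (rule partitions_cube_cover[OF twist_piecesD(2)[OF assms]])
  then show ?thesis
    using that by (cases t) auto
qed

lemma twist_pieces_mono: "twist_pieces G h T \<Longrightarrow> G \<subseteq> G' \<Longrightarrow> twist_pieces G' h T"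
  by (fastforce simp: twist_pieces_def)

lemma image_twist_piece:
  assumes "\<And>\<gamma>. \<gamma> \<in> G \<Longrightarrow> bij \<gamma>" "twist_pieces G h T" "(\<phi>, \<psi>, \<gamma>) \<in> T"
  shows "h ` brick \<phi> = brick \<psi>"
proof -
  have "h ` brick \<phi> = twist \<phi> \<psi> \<gamma> ` brick \<phi>"
    using twist_piecesD(6)[OF assms(2,3)] by (rule image_cong[OF refl])
  also have "\<dots> = brick \<psi>"
    using assms twist_piecesD(5) image_twist by blast
  finally show ?thesis .
qed

lemma twist_pieces_targets:
  assumes "\<And>\<gamma>. \<gamma> \<in> G \<Longrightarrow> bij \<gamma>" "twist_pieces G h T" "bij h"
  shows "partitions_cube (fst \<circ> snd) T"
proof (rule partitions_cube_image[OF assms(3) twist_piecesD(2)[OF assms(2)]])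
  fix t assume "t \<in> T"
  then show "h ` brick (fst t) = brick ((fst \<circ> snd) t)"
    using image_twist_piece[OF assms(1,2)] by (cases t) simp
qed

lemma continuous_map_twist_pieces:
  assumes "twist_pieces G h T"
  shows "continuous_map cube_top cube_top h"
  unfolding continuous_map_def
proof (intro conjI allI impI)
  fix U :: "'a cube set" assume U: "openin cube_top U"
  define V where "V t = brick (fst t) \<inter> {x \<in> topspace cube_top. twist (fst t) (fst (snd t)) (snd (snd t)) x \<in> U}"
    for t :: "'a piece"
  have "{x \<in> topspace cube_top. h x \<in> U} = (\<Union>t\<in>T. V t)"
  proof (intro Set.set_eqI iffI)
    fix x assume x: "x \<in> {x \<in> topspace cube_top. h x \<in> U}"
    obtain \<phi> \<psi> \<gamma> where "(\<phi>, \<psi>, \<gamma>) \<in> T" "x \<in> brick \<phi>"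
      using twist_pieces_cover[OF assms] .
    then show "x \<in> (\<Union>t\<in>T. V t)"
      using x twist_piecesD(6)[OF assms] by (force simp: V_def)
  next
    fix x assume "x \<in> (\<Union>t\<in>T. V t)"
    then obtain \<phi> \<psi> \<gamma> where "(\<phi>, \<psi>, \<gamma>) \<in> T" "x \<in> brick \<phi>" "twist \<phi> \<psi> \<gamma> x \<in> U"
      by (force simp: V_def)
    then show "x \<in> {x \<in> topspace cube_top. h x \<in> U}"
      using twist_piecesD(6)[OF assms] by simp
  qed
  also have "openin cube_top (\<Union>t\<in>T. V t)"
  proof (rule openin_Union, clarify)
    fix \<phi> \<psi> \<gamma> assume "(\<phi>, \<psi>, \<gamma>) \<in> T"
    then show "openin cube_top (V (\<phi>, \<psi>, \<gamma>))"
      unfolding V_def using twist_piecesD(3)[OF assms]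
      by (intro openin_Int openin_brick openin_continuous_map_preimage[OF continuous_map_twist U]) auto
  qed
  finally show "openin cube_top {x \<in> topspace cube_top. h x \<in> U}" .
qed simp

definition glue :: "'a piece set \<Rightarrow> 'a cube \<Rightarrow> 'a cube" where
  "glue T \<kappa> = (case SOME t. t \<in> T \<and> \<kappa> \<in> brick (fst t) of (\<phi>, \<psi>, \<gamma>) \<Rightarrow> twist \<phi> \<psi> \<gamma> \<kappa>)"

lemma glue_eq:
  assumes "partitions_cube fst T" "(\<phi>, \<psi>, \<gamma>) \<in> T" "\<kappa> \<in> brick \<phi>"
  shows "glue T \<kappa> = twist \<phi> \<psi> \<gamma> \<kappa>"
proof -
  have "(SOME t. t \<in> T \<and> \<kappa> \<in> brick (fst t)) = (\<phi>, \<psi>, \<gamma>)"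
    using assms partitions_cube_unique[OF assms(1)] by (intro some_equality) auto
  then show ?thesis
    by (simp add: glue_def)
qed

lemma twist_pieces_glue:
  assumes "finite T" "partitions_cube fst T"
    and "\<And>\<phi> \<psi> \<gamma>. (\<phi>, \<psi>, \<gamma>) \<in> T \<Longrightarrow> fin_supp \<phi> \<and> fin_supp \<psi> \<and> \<gamma> \<in> G"
  shows "twist_pieces G (glue T) T"
  using assms glue_eq[OF assms(2)] by (auto simp: twist_pieces_def)

definition swap_pieces :: "'a piece set \<Rightarrow> 'a piece set" where
  "swap_pieces T = (\<lambda>(\<phi>, \<psi>, \<gamma>). (\<psi>, \<phi>, inv_fun \<gamma>)) ` T"

lemma twist_pieces_swap:
  assumes "\<And>\<gamma>. \<gamma> \<in> G \<Longrightarrow> bij \<gamma>" "twist_pieces G h T" "partitions_cube (fst \<circ> snd) T"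
  shows "twist_pieces (inv_fun ` G) (glue (swap_pieces T)) (swap_pieces T)"
proof (rule twist_pieces_glue)
  have "inv_fun \<gamma> = inv_fun \<gamma>' \<Longrightarrow> \<gamma> = \<gamma>'" if "(\<phi>, \<psi>, \<gamma>) \<in> T" "(\<phi>', \<psi>', \<gamma>') \<in> T"
    for \<phi> \<psi> \<gamma> \<phi>' \<psi>' \<gamma>'
    using that assms(1) twist_piecesD(5)[OF assms(2)] by (metis inv_inv_eq)
  then have "bij_betw (\<lambda>(\<phi>, \<psi>, \<gamma>). (\<psi>, \<phi>, inv_fun \<gamma>)) T (swap_pieces T)"
    by (auto simp: bij_betw_def inj_on_def swap_pieces_def)
  from partitions_cube_reindex[OF this, of "fst \<circ> snd" fst]
  show "partitions_cube fst (swap_pieces T)"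
    using assms(3) by auto
qed (use twist_piecesD[OF assms(2)] in \<open>auto simp: swap_pieces_def\<close>)

lemma homeomorphic_maps_twist_pieces:
  assumes "\<And>\<gamma>. \<gamma> \<in> G \<Longrightarrow> bij \<gamma>" "twist_pieces G h T" "twist_pieces G' h' (swap_pieces T)"
  shows "homeomorphic_maps cube_top cube_top h h'"
  unfolding homeomorphic_maps_def
proof (intro conjI ballI)
  fix x
  obtain \<phi> \<psi> \<gamma> where t: "(\<phi>, \<psi>, \<gamma>) \<in> T" "x \<in> brick \<phi>"
    using twist_pieces_cover[OF assms(2)] .
  then have "(\<psi>, \<phi>, inv_fun \<gamma>) \<in> swap_pieces T"
    by (force simp: swap_pieces_def)
  then show "h' (h x) = x"
    using t assms(1) twist_piecesD(5,6)[OF assms(2) t(1)] twist_piecesD(6)[OF assms(3)]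
    by (simp add: twist_in_brick twist_inv_twist)
next
  fix y
  obtain \<psi> \<phi> \<delta> where s: "(\<psi>, \<phi>, \<delta>) \<in> swap_pieces T" "y \<in> brick \<psi>"
    using twist_pieces_cover[OF assms(3)] .
  then obtain \<gamma> where t: "(\<phi>, \<psi>, \<gamma>) \<in> T" "\<delta> = inv_fun \<gamma>"
    by (auto simp: swap_pieces_def)
  then have "bij \<gamma>"
    using assms(1) twist_piecesD(5)[OF assms(2)] by blast
  then have "twist \<phi> \<psi> \<gamma> (twist \<psi> \<phi> (inv_fun \<gamma>) y) = y"
    using twist_inv_twist[of "inv_fun \<gamma>" y \<psi> \<phi>] s(2) by (simp add: bij_imp_bij_inv inv_inv_eq)
  then show "h (h' y) = y"
    using s t twist_piecesD(6)[OF assms(2) t(1)] twist_piecesD(6)[OF assms(3) s(1)]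
    by (simp add: twist_in_brick)
qed (use continuous_map_twist_pieces assms(2,3) in auto)

definition pieces_of ::
    "(nat \<Rightarrow> 'a \<Rightarrow> bool list) \<Rightarrow> (nat \<Rightarrow> 'a \<Rightarrow> bool list) \<Rightarrow> (nat \<Rightarrow> 'a \<Rightarrow> 'a) \<Rightarrow> nat \<Rightarrow> 'a piece set" where
  "pieces_of \<phi> \<psi> \<gamma> n = (\<lambda>i. (\<phi> i, \<psi> i, \<gamma> i)) ` {..<n}"

lemma
  assumes "partitions_cube \<phi> {..<n}"
  shows partitions_cube_fst_pieces_of: "partitions_cube fst (pieces_of \<phi> \<psi> \<gamma> n)"
    and partitions_cube_snd_pieces_of:
      "partitions_cube \<psi> {..<n} \<Longrightarrow> partitions_cube (fst \<circ> snd) (pieces_of \<phi> \<psi> \<gamma> n)"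
proof -
  have "inj_on (\<lambda>i. (\<phi> i, \<psi> i, \<gamma> i)) {..<n}"
    using partitions_cube_inj[OF assms] by (auto simp: inj_on_def)
  then have bij: "bij_betw (\<lambda>i. (\<phi> i, \<psi> i, \<gamma> i)) {..<n} (pieces_of \<phi> \<psi> \<gamma> n)"
    by (simp add: bij_betw_imageI pieces_of_def)
  show "partitions_cube fst (pieces_of \<phi> \<psi> \<gamma> n)"
    using partitions_cube_reindex[OF bij, of \<phi> fst] assms by simp
  show "partitions_cube (fst \<circ> snd) (pieces_of \<phi> \<psi> \<gamma> n)" if "partitions_cube \<psi> {..<n}"
    using partitions_cube_reindex[OF bij, of \<psi> "fst \<circ> snd"] that by simp
qed

lemma twist_pieces_of:
  assumes "brick_partition \<phi> n" "brick_partition \<psi> n" "\<And>i. i < n \<Longrightarrow> \<gamma> i \<in> G"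
    and "\<And>i \<kappa>. i < n \<Longrightarrow> \<kappa> \<in> brick (\<phi> i) \<Longrightarrow> h \<kappa> = twist (\<phi> i) (\<psi> i) (\<gamma> i) \<kappa>"
  shows "twist_pieces G h (pieces_of \<phi> \<psi> \<gamma> n)"
  using assms partitions_cube_fst_pieces_of[of \<phi> n \<psi> \<gamma>]
  by (auto simp: twist_pieces_def pieces_of_def brick_partition_iff)

lemma glue_pieces_of:
  assumes "brick_partition \<phi> n" "i < n" "\<kappa> \<in> brick (\<phi> i)"
  shows "glue (pieces_of \<phi> \<psi> \<gamma> n) \<kappa> = twist (\<phi> i) (\<psi> i) (\<gamma> i) \<kappa>"
  using assms partitions_cube_fst_pieces_of[of \<phi> n \<psi> \<gamma>]
  by (intro glue_eq) (auto simp: pieces_of_def brick_partition_iff)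

lemma bij_if_homeomorphic_map_cube:
  "homeomorphic_map cube_top cube_top h \<Longrightarrow> bij h"
  using homeomorphic_imp_injective_map[of cube_top cube_top h]
    homeomorphic_imp_surjective_map[of cube_top cube_top h]
  by (simp add: bij_def)

lemma SVG_iff_twist_pieces:
  assumes "\<And>\<gamma>. \<gamma> \<in> G \<Longrightarrow> bij \<gamma>"
  shows "h \<in> SVG G \<longleftrightarrow> homeomorphic_map cube_top cube_top h \<and> (\<exists>T. twist_pieces G h T)"
proof
  assume "h \<in> SVG G"
  then obtain n \<phi> \<psi> \<gamma> where hom: "homeomorphic_map cube_top cube_top h"
    and bp: "brick_partition \<phi> n" "brick_partition \<psi> n" and G: "\<forall>i<n. \<gamma> i \<in> G"
    and h: "\<forall>i<n. \<forall>\<kappa>\<in>brick (\<phi> i). h \<kappa> = twist (\<phi> i) (\<psi> i) (\<gamma> i) \<kappa>"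
    unfolding SVG_def by blast
  have "twist_pieces G h (pieces_of \<phi> \<psi> \<gamma> n)"
    using bp G h by (intro twist_pieces_of) auto
  with hom show "homeomorphic_map cube_top cube_top h \<and> (\<exists>T. twist_pieces G h T)"
    by blast
next
  assume "homeomorphic_map cube_top cube_top h \<and> (\<exists>T. twist_pieces G h T)"
  then obtain T where hom: "homeomorphic_map cube_top cube_top h" and T: "twist_pieces G h T"
    by blast
  define n where "n = card T"
  obtain e where e: "bij_betw e {..<n} T"
    using ex_bij_betw_nat_finite[OF twist_piecesD(1)[OF T]] by (auto simp: n_def atLeast0LessThan)
  have eT: "(fst (e i), fst (snd (e i)), snd (snd (e i))) \<in> T" if "i < n" for i
    using e that by (auto simp: bij_betw_apply)
  have "partitions_cube (fst \<circ> e) {..<n}"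
    using partitions_cube_reindex[OF e, of "fst \<circ> e" fst] twist_piecesD(2)[OF T] by simp
  moreover have "partitions_cube (fst \<circ> snd \<circ> e) {..<n}"
    using partitions_cube_reindex[OF e, of "fst \<circ> snd \<circ> e" "fst \<circ> snd"]
      twist_pieces_targets[OF assms T bij_if_homeomorphic_map_cube[OF hom]] by simp
  ultimately have "brick_partition (fst \<circ> e) n" "brick_partition (fst \<circ> snd \<circ> e) n"
    using twist_piecesD(3,4)[OF T eT] by (auto simp: brick_partition_iff)
  moreover have "\<forall>i<n. (snd \<circ> snd \<circ> e) i \<in> G"
    using twist_piecesD(5)[OF T eT] by simp
  moreover have "\<forall>i<n. \<forall>\<kappa>\<in>brick ((fst \<circ> e) i).
      h \<kappa> = twist ((fst \<circ> e) i) ((fst \<circ> snd \<circ> e) i) ((snd \<circ> snd \<circ> e) i) \<kappa>"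
    using twist_piecesD(6)[OF T eT] by simp
  ultimately show "h \<in> SVG G"
    unfolding SVG_def using hom by blast
qed

lemma SVG_mono: "G \<subseteq> G' \<Longrightarrow> SVG G \<subseteq> SVG G'"
  unfolding SVG_def by blast

lemma twist_pieces_id:
  assumes "id \<in> G"
  shows "twist_pieces G id {(\<lambda>_. [], \<lambda>_. [], id)}"
proof -
  have "brick (\<lambda>_. []) = UNIV"
    by (simp add: brick_def is_prefix_def)
  then show ?thesis
    using assms by (simp add: twist_pieces_def partitions_cube_def fin_supp_def twist_self_id)
qed

section \<open>Composing piecewise twists\<close>

text \<open>Both twists are restricted to the intersection \<open>brick_meet \<psi> \<phi>'\<close> of the middle bricks.\<close>
fun comp_piece :: "'a piece \<Rightarrow> 'a piece \<Rightarrow> 'a piece" where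
  "comp_piece (\<phi>, \<psi>, \<gamma>) (\<phi>', \<psi>', \<gamma>') =
     (twist_label \<psi> \<phi> (inv_fun \<gamma>) (brick_meet \<psi> \<phi>'), twist_label \<phi>' \<psi>' \<gamma>' (brick_meet \<psi> \<phi>'), \<gamma>' \<circ> \<gamma>)"

lemma
  assumes "bij \<gamma>" "bij \<gamma>'" "y \<in> brick \<psi>" "y \<in> brick \<phi>'"
    and "comp_piece (\<phi>, \<psi>, \<gamma>) (\<phi>', \<psi>', \<gamma>') = (\<epsilon>, \<rho>, \<delta>)"
  shows brick_comp_piece: "brick \<epsilon> = {\<kappa> \<in> brick \<phi>. twist \<phi> \<psi> \<gamma> \<kappa> \<in> brick \<phi>'}"
    and twist_comp_piece: "\<kappa> \<in> brick \<epsilon> \<Longrightarrow> twist \<phi>' \<psi>' \<gamma>' (twist \<phi> \<psi> \<gamma> \<kappa>) = twist \<epsilon> \<rho> \<delta> \<kappa>"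
proof -
  define \<mu> where "\<mu> = brick_meet \<psi> \<phi>'"
  have \<epsilon>: "\<epsilon> = twist_label \<psi> \<phi> (inv_fun \<gamma>) \<mu>" and \<rho>: "\<rho> = twist_label \<phi>' \<psi>' \<gamma>' \<mu>"
    and \<delta>: "\<delta> = \<gamma>' \<circ> \<gamma>"
    using assms(5) by (auto simp: \<mu>_def)
  have \<psi>\<mu>: "\<And>u. prefix (\<psi> u) (\<mu> u)"
    unfolding \<mu>_def using assms(3,4) by (rule prefix_brick_meet1)
  have \<phi>'\<mu>: "\<And>u. prefix (\<phi>' u) (\<mu> u)"
    unfolding \<mu>_def using assms(3,4) by (rule prefix_brick_meet2)
  have "{\<kappa> \<in> brick \<phi>. twist \<phi> \<psi> \<gamma> \<kappa> \<in> brick \<phi>'} = {\<kappa> \<in> brick \<phi>. twist \<phi> \<psi> \<gamma> \<kappa> \<in> brick \<mu>}"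
    using brick_Int_brick[OF assms(3,4)] twist_in_brick by (fastforce simp: \<mu>_def)
  also have "\<dots> = brick \<epsilon>"
    unfolding \<epsilon> by (rule twist_preimage_brick[OF assms(1) \<psi>\<mu>])
  finally show "brick \<epsilon> = {\<kappa> \<in> brick \<phi>. twist \<phi> \<psi> \<gamma> \<kappa> \<in> brick \<phi>'}" ..
  assume \<kappa>: "\<kappa> \<in> brick \<epsilon>"
  have "twist \<phi> \<psi> \<gamma> \<kappa> = twist \<epsilon> \<mu> \<gamma> \<kappa>"
    using twist_refine[of \<phi> \<epsilon>, OF _ \<kappa>] twist_label_twist_label[OF assms(1) \<psi>\<mu>]
    by (simp add: \<epsilon> prefix_twist_label)
  moreover have "twist \<phi>' \<psi>' \<gamma>' (twist \<epsilon> \<mu> \<gamma> \<kappa>) = twist \<mu> \<rho> \<gamma>' (twist \<epsilon> \<mu> \<gamma> \<kappa>)"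
    unfolding \<rho> by (rule twist_refine[of \<phi>' \<mu>, OF \<phi>'\<mu> twist_in_brick])
  ultimately show "twist \<phi>' \<psi>' \<gamma>' (twist \<phi> \<psi> \<gamma> \<kappa>) = twist \<epsilon> \<rho> \<delta> \<kappa>"
    by (simp add: \<delta> twist_twist assms(1,2))
qed

lemma fin_supp_comp_piece:
  assumes "fin_supp \<phi>" "fin_supp \<psi>'" "fin_supp \<psi>" "fin_supp \<phi>'" "bij \<gamma>" "bij \<gamma>'"
    and "comp_piece (\<phi>, \<psi>, \<gamma>) (\<phi>', \<psi>', \<gamma>') = (\<epsilon>, \<rho>, \<delta>)"
  shows "fin_supp \<epsilon>" "fin_supp \<rho>"
proof -
  have \<mu>: "fin_supp (brick_meet \<psi> \<phi>')"
    using assms(3,4) by (rule fin_supp_brick_meet)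
  have "\<epsilon> = twist_label \<psi> \<phi> (inv_fun \<gamma>) (brick_meet \<psi> \<phi>')" "\<rho> = twist_label \<phi>' \<psi>' \<gamma>' (brick_meet \<psi> \<phi>')"
    using assms(7) by auto
  then show "fin_supp \<epsilon>" "fin_supp \<rho>"
    using fin_supp_twist_label[OF assms(1) \<mu> bij_imp_bij_inv[OF assms(5)]]
      fin_supp_twist_label[OF assms(2) \<mu> assms(6)] by simp_all
qed

lemma comp_piece_twist_pieces:
  assumes G: "\<And>\<gamma>. \<gamma> \<in> G \<Longrightarrow> bij \<gamma>" and T1: "twist_pieces G h1 T1" and T2: "twist_pieces G h2 T2"
    and pq: "p \<in> T1" "q \<in> T2" "\<kappa>\<^sub>0 \<in> brick (fst p)" "h1 \<kappa>\<^sub>0 \<in> brick (fst q)"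
    and cp: "comp_piece p q = (\<epsilon>, \<rho>, \<delta>)"
  shows "brick \<epsilon> = {\<kappa> \<in> brick (fst p). h1 \<kappa> \<in> brick (fst q)}"
    and "\<kappa> \<in> brick \<epsilon> \<Longrightarrow> h2 (h1 \<kappa>) = twist \<epsilon> \<rho> \<delta> \<kappa>"
    and "fin_supp \<epsilon>" "fin_supp \<rho>" "\<delta> = snd (snd q) \<circ> snd (snd p)"
proof -
  obtain \<phi> \<psi> \<gamma> \<phi>' \<psi>' \<gamma>' where p: "p = (\<phi>, \<psi>, \<gamma>)" and q: "q = (\<phi>', \<psi>', \<gamma>')"
    by (metis prod_cases3)
  have bij: "bij \<gamma>" "bij \<gamma>'"
    using G twist_piecesD(5)[OF T1] twist_piecesD(5)[OF T2] pq(1,2) by (auto simp: p q)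
  have h1: "\<And>\<kappa>. \<kappa> \<in> brick \<phi> \<Longrightarrow> h1 \<kappa> = twist \<phi> \<psi> \<gamma> \<kappa>"
    using twist_piecesD(6)[OF T1] pq(1) by (simp add: p)
  have y: "h1 \<kappa>\<^sub>0 \<in> brick \<psi>" "h1 \<kappa>\<^sub>0 \<in> brick \<phi>'"
    using h1 pq(3,4) by (simp_all add: p q twist_in_brick)
  note cp' = cp[unfolded p q]
  note dom = brick_comp_piece[OF bij y cp']
  show "brick \<epsilon> = {\<kappa> \<in> brick (fst p). h1 \<kappa> \<in> brick (fst q)}"
    using dom h1 by (auto simp: p q)
  show "h2 (h1 \<kappa>) = twist \<epsilon> \<rho> \<delta> \<kappa>" if "\<kappa> \<in> brick \<epsilon>"
    using that dom h1 twist_piecesD(6)[OF T2] pq(2) twist_comp_piece[OF bij y cp' that] by (auto simp: q)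
  show "fin_supp \<epsilon>" "fin_supp \<rho>"
    using fin_supp_comp_piece[OF _ _ _ _ bij cp'] twist_piecesD(3,4)[OF T1] twist_piecesD(3,4)[OF T2] pq(1,2)
    by (simp_all add: p q)
  show "\<delta> = snd (snd q) \<circ> snd (snd p)"
    using cp' by (simp add: p q)
qed

definition comp_pieces :: "('a cube \<Rightarrow> 'a cube) \<Rightarrow> 'a piece set \<Rightarrow> 'a piece set \<Rightarrow> 'a piece set" where
  "comp_pieces h1 T1 T2 = (\<lambda>(p, q). comp_piece p q) `
     {(p, q) \<in> T1 \<times> T2. \<exists>\<kappa>\<in>brick (fst p). h1 \<kappa> \<in> brick (fst q)}"

lemma comp_piecesE:
  assumes "s \<in> comp_pieces h1 T1 T2"
  obtains p q \<kappa>\<^sub>0 where "p \<in> T1" "q \<in> T2" "\<kappa>\<^sub>0 \<in> brick (fst p)" "h1 \<kappa>\<^sub>0 \<in> brick (fst q)"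
    "s = comp_piece p q"
proof -
  obtain pq where "pq \<in> {(p, q) \<in> T1 \<times> T2. \<exists>\<kappa>\<in>brick (fst p). h1 \<kappa> \<in> brick (fst q)}"
    "s = (\<lambda>(p, q). comp_piece p q) pq"
    using assms unfolding comp_pieces_def by (rule imageE)
  then show thesis
    using that by (cases pq) (auto simp del: comp_piece.simps)
qed

lemma brick_fst_comp_piece:
  assumes "\<And>\<gamma>. \<gamma> \<in> G \<Longrightarrow> bij \<gamma>" "twist_pieces G h1 T1" "twist_pieces G h2 T2"
    and "p \<in> T1" "q \<in> T2" "\<kappa>\<^sub>0 \<in> brick (fst p)" "h1 \<kappa>\<^sub>0 \<in> brick (fst q)"
  shows "brick (fst (comp_piece p q)) = {\<kappa> \<in> brick (fst p). h1 \<kappa> \<in> brick (fst q)}"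
proof -
  obtain \<epsilon> \<rho> \<delta> where "comp_piece p q = (\<epsilon>, \<rho>, \<delta>)"
    using prod_cases3 by blast
  then show ?thesis
    using comp_piece_twist_pieces(1)[OF assms] by simp
qed

lemma partitions_cube_comp_pieces:
  assumes G: "\<And>\<gamma>. \<gamma> \<in> G \<Longrightarrow> bij \<gamma>" and T1: "twist_pieces G h1 T1" and T2: "twist_pieces G h2 T2"
  shows "partitions_cube fst (comp_pieces h1 T1 T2)"
proof (rule partitions_cubeI)
  have dom: "brick (fst (comp_piece p q)) = {\<kappa> \<in> brick (fst p). h1 \<kappa> \<in> brick (fst q)}"
    if "p \<in> T1" "q \<in> T2" "\<kappa>\<^sub>0 \<in> brick (fst p)" "h1 \<kappa>\<^sub>0 \<in> brick (fst q)" for p q \<kappa>\<^sub>0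
    using G T1 T2 that by (rule brick_fst_comp_piece)
  fix \<kappa>
  obtain p where p: "p \<in> T1" "\<kappa> \<in> brick (fst p)"
    using partitions_cube_cover[OF twist_piecesD(2)[OF T1]] .
  obtain q where q: "q \<in> T2" "h1 \<kappa> \<in> brick (fst q)"
    using partitions_cube_cover[OF twist_piecesD(2)[OF T2]] .
  have "comp_piece p q \<in> comp_pieces h1 T1 T2"
    unfolding comp_pieces_def by (rule rev_image_eqI[of "(p, q)"]) (use p q in auto)
  moreover have "\<kappa> \<in> brick (fst (comp_piece p q))"
    using dom[OF p(1) q(1) p(2) q(2)] p q by simp
  ultimately show "\<exists>t\<in>comp_pieces h1 T1 T2. \<kappa> \<in> brick (fst t)" ..
next
  have dom: "brick (fst (comp_piece p q)) = {\<kappa> \<in> brick (fst p). h1 \<kappa> \<in> brick (fst q)}"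
    if "p \<in> T1" "q \<in> T2" "\<kappa>\<^sub>0 \<in> brick (fst p)" "h1 \<kappa>\<^sub>0 \<in> brick (fst q)" for p q \<kappa>\<^sub>0
    using G T1 T2 that by (rule brick_fst_comp_piece)
  fix s s' \<kappa> assume "s \<in> comp_pieces h1 T1 T2" "s' \<in> comp_pieces h1 T1 T2"
    and \<kappa>: "\<kappa> \<in> brick (fst s)" "\<kappa> \<in> brick (fst s')"
  obtain p q \<kappa>\<^sub>1 where p: "p \<in> T1" "q \<in> T2" "\<kappa>\<^sub>1 \<in> brick (fst p)" "h1 \<kappa>\<^sub>1 \<in> brick (fst q)"
    and s: "s = comp_piece p q"
    using \<open>s \<in> comp_pieces h1 T1 T2\<close> by (rule comp_piecesE)
  obtain p' q' \<kappa>\<^sub>2 where p': "p' \<in> T1" "q' \<in> T2" "\<kappa>\<^sub>2 \<in> brick (fst p')" "h1 \<kappa>\<^sub>2 \<in> brick (fst q')"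
    and s': "s' = comp_piece p' q'"
    using \<open>s' \<in> comp_pieces h1 T1 T2\<close> by (rule comp_piecesE)
  have "\<kappa> \<in> brick (fst p)" "h1 \<kappa> \<in> brick (fst q)" "\<kappa> \<in> brick (fst p')" "h1 \<kappa> \<in> brick (fst q')"
    using dom[OF p] dom[OF p'] \<kappa> by (auto simp: s s')
  then have "p = p'" "q = q'"
    using partitions_cube_unique[OF twist_piecesD(2)[OF T1]]
      partitions_cube_unique[OF twist_piecesD(2)[OF T2]] p p' by blast+
  then show "s = s'"
    by (simp add: s s')
qed

lemma twist_pieces_comp:
  assumes G: "\<And>\<gamma>. \<gamma> \<in> G \<Longrightarrow> bij \<gamma>" "\<And>\<gamma> \<gamma>'. \<gamma> \<in> G \<Longrightarrow> \<gamma>' \<in> G \<Longrightarrow> \<gamma>' \<circ> \<gamma> \<in> G"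
    and T1: "twist_pieces G h1 T1" and T2: "twist_pieces G h2 T2"
  shows "twist_pieces G (h2 \<circ> h1) (comp_pieces h1 T1 T2)"
proof -
  have "finite (comp_pieces h1 T1 T2)"
    unfolding comp_pieces_def
    by (rule finite_imageI, rule finite_subset[of _ "T1 \<times> T2"])
      (use twist_piecesD(1)[OF T1] twist_piecesD(1)[OF T2] in auto)
  moreover have "fin_supp \<epsilon> \<and> fin_supp \<rho> \<and> \<delta> \<in> G \<and> (\<forall>\<kappa>\<in>brick \<epsilon>. (h2 \<circ> h1) \<kappa> = twist \<epsilon> \<rho> \<delta> \<kappa>)"
    if mem: "(\<epsilon>, \<rho>, \<delta>) \<in> comp_pieces h1 T1 T2" for \<epsilon> \<rho> \<delta>
  proof -
    obtain p q \<kappa>\<^sub>0 where pq: "p \<in> T1" "q \<in> T2" "\<kappa>\<^sub>0 \<in> brick (fst p)" "h1 \<kappa>\<^sub>0 \<in> brick (fst q)"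
      and "(\<epsilon>, \<rho>, \<delta>) = comp_piece p q"
      using mem by (rule comp_piecesE)
    then have cp: "comp_piece p q = (\<epsilon>, \<rho>, \<delta>)"
      by simp
    note piece = comp_piece_twist_pieces[OF G(1) T1 T2 pq cp]
    have "\<delta> \<in> G"
      using piece(5) G(2) twist_piecesD(5)[OF T1] twist_piecesD(5)[OF T2] pq(1,2)
      by (metis prod.collapse)
    then show ?thesis
      using piece(2-4) by simp
  qed
  ultimately show ?thesis
    using partitions_cube_comp_pieces[OF G(1) T1 T2] unfolding twist_pieces_def by auto
qed

section \<open>The twisted Brin--Thompson group is a group\<close>

lemma homeomorphic_map_twist_pieces:
  assumes "\<And>\<gamma>. \<gamma> \<in> G \<Longrightarrow> bij \<gamma>" "twist_pieces G h T" "partitions_cube (fst \<circ> snd) T"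
  shows "homeomorphic_map cube_top cube_top h"
  using homeomorphic_maps_twist_pieces[OF assms(1,2) twist_pieces_swap[OF assms]]
  by (auto simp: homeomorphic_map_maps)

lemma SVG_comp:
  assumes "subgroup G (BijGroup UNIV)" "h1 \<in> SVG G" "h2 \<in> SVG G"
  shows "h2 \<circ> h1 \<in> SVG G"
proof -
  note G = subgroup_BijGroup_UNIV_bij[OF assms(1)] subgroup_BijGroup_UNIV_comp[OF assms(1)]
  obtain T1 T2 where T: "twist_pieces G h1 T1" "twist_pieces G h2 T2"
    and hom: "homeomorphic_map cube_top cube_top h1" "homeomorphic_map cube_top cube_top h2"
    using assms(2,3) SVG_iff_twist_pieces[OF G(1)] by blast
  have "homeomorphic_map cube_top cube_top (h2 \<circ> h1)"
    using hom by (rule homeomorphic_map_compose)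
  then show ?thesis
    using twist_pieces_comp[OF G T] SVG_iff_twist_pieces[OF G(1)] by blast
qed

lemma SVG_inv:
  assumes "subgroup G (BijGroup UNIV)" "h \<in> SVG G"
  shows "inv_fun h \<in> SVG G"
proof -
  note G = subgroup_BijGroup_UNIV_bij[OF assms(1)]
  have inv_G: "inv_fun ` G \<subseteq> G"
    using subgroup_BijGroup_UNIV_inv[OF assms(1)] by blast
  obtain T where hom: "homeomorphic_map cube_top cube_top h" and T: "twist_pieces G h T"
    using assms(2) SVG_iff_twist_pieces[OF G] by blast
  define g where "g = glue (swap_pieces T)"
  have "twist_pieces (inv_fun ` G) g (swap_pieces T)"
    unfolding g_def
    by (rule twist_pieces_swap[OF G T twist_pieces_targets[OF G T bij_if_homeomorphic_map_cube[OF hom]]])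
  then have "twist_pieces G g (swap_pieces T)"
    using inv_G by (rule twist_pieces_mono)
  moreover from this have "homeomorphic_maps cube_top cube_top h g"
    using homeomorphic_maps_twist_pieces[OF G T] by blast
  moreover from calculation have "inv_fun h = g"
    by (intro inv_equality) (auto simp: homeomorphic_maps_def)
  moreover from calculation have "homeomorphic_map cube_top cube_top g"
    using homeomorphic_map_maps homeomorphic_maps_sym by blast
  ultimately show ?thesis
    using SVG_iff_twist_pieces[OF G] by blast
qed

lemma subgroup_SVG:
  assumes "subgroup G (BijGroup UNIV)"
  shows "subgroup (SVG G) (BijGroup UNIV)"
proof -
  note G = subgroup_BijGroup_UNIV_bij[OF assms] subgroup_BijGroup_UNIV_id[OF assms]
  have "id \<in> SVG G"
    using SVG_iff_twist_pieces[OF G(1)] twist_pieces_id[OF G(2)] by auto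
  moreover have "bij h" if "h \<in> SVG G" for h
    using that SVG_iff_twist_pieces[OF G(1)] bij_if_homeomorphic_map_cube by blast
  ultimately show ?thesis
    using SVG_comp[OF assms] SVG_inv[OF assms] by (auto simp: subgroup_BijGroup_UNIV_iff)
qed

lemma in_SVG_if_pieces:
  assumes "\<And>\<gamma>. \<gamma> \<in> G \<Longrightarrow> bij \<gamma>" "brick_partition \<phi> n" "brick_partition \<psi> n" "\<And>i. i < n \<Longrightarrow> \<gamma> i \<in> G"
    and "\<And>i \<kappa>. i < n \<Longrightarrow> \<kappa> \<in> brick (\<phi> i) \<Longrightarrow> h \<kappa> = twist (\<phi> i) (\<psi> i) (\<gamma> i) \<kappa>"
  shows "h \<in> SVG G"
proof -
  have "twist_pieces G h (pieces_of \<phi> \<psi> \<gamma> n)"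
    using assms(2-5) by (rule twist_pieces_of)
  moreover have "partitions_cube (fst \<circ> snd) (pieces_of \<phi> \<psi> \<gamma> n)"
    using assms(2,3) by (intro partitions_cube_snd_pieces_of) (simp_all add: brick_partition_iff)
  ultimately have "homeomorphic_map cube_top cube_top h"
    using assms(1) homeomorphic_map_twist_pieces by blast
  then show ?thesis
    unfolding SVG_def using assms(2-5) by blast
qed

section \<open>Generators\<close>

definition coord_label :: "'a \<Rightarrow> bool list \<Rightarrow> 'a \<Rightarrow> bool list" where
  "coord_label s w t = (if t = s then w else [])"

lemma brick_coord_label: "\<kappa> \<in> brick (coord_label s w) \<longleftrightarrow> is_prefix w (\<kappa> s)"
  by (simp add: brick_def coord_label_def is_prefix_def)

lemma fin_supp_coord_label: "fin_supp (coord_label s w)"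
  unfolding fin_supp_def by (rule finite_subset[of _ "{s}"]) (auto simp: coord_label_def)

definition comb_label :: "'a \<Rightarrow> nat \<Rightarrow> nat \<Rightarrow> 'a \<Rightarrow> bool list" where
  "comb_label s m k = coord_label s (replicate k False @ (if k < m then [True] else []))"

lemma brick_comb_label: "\<kappa> \<in> brick (comb_label s m k) \<longleftrightarrow> (\<forall>j<k. \<not> \<kappa> s j) \<and> (k < m \<longrightarrow> \<kappa> s k)"
  unfolding comb_label_def brick_coord_label is_prefix_def
  by (auto simp: nth_append less_Suc_eq)

lemma comb_label_0: "0 < m \<Longrightarrow> comb_label s m 0 = psi_s s"
  by (simp add: comb_label_def coord_label_def psi_s_def fun_eq_iff)

lemma brick_partition_comb_label: "brick_partition (comb_label s m) (Suc m)"
  unfolding brick_partition_iff lessThan_Suc_atMost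
proof (intro conjI allI impI partitions_cubeI)
  show "fin_supp (comb_label s m k)" for k
    by (simp add: comb_label_def fin_supp_coord_label)
  fix \<kappa>
  show "\<exists>k\<in>{..m}. \<kappa> \<in> brick (comb_label s m k)"
  proof (cases "\<exists>j<m. \<kappa> s j")
    case True
    define k where "k = (LEAST j. \<kappa> s j)"
    obtain j where "j < m" "\<kappa> s j"
      using True by blast
    then have "\<kappa> s k" "k < m"
      unfolding k_def by (auto intro: LeastI Least_le order.strict_trans1)
    moreover have "\<forall>j<k. \<not> \<kappa> s j"
      unfolding k_def using not_less_Least by blast
    ultimately show ?thesis
      by (auto simp: brick_comb_label)
  next
    case False
    then have "\<kappa> \<in> brick (comb_label s m m)"
      by (simp add: brick_comb_label)
    then show ?thesis
      by auto
  qed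
next
  fix k l \<kappa> assume "k \<in> {..m}" "l \<in> {..m}" "\<kappa> \<in> brick (comb_label s m k)" "\<kappa> \<in> brick (comb_label s m l)"
  then show "k = l"
    unfolding brick_comb_label atMost_iff by (metis linorder_neqE_nat order.strict_trans2)
qed

lemma brick_partition_comb_label_1: "brick_partition (comb_label s 1) 2"
  using brick_partition_comb_label[of s 1] by (simp add: numeral_2_eq_2)

definition local_twist :: "('a \<Rightarrow> bool list) \<Rightarrow> ('a \<Rightarrow> 'a) \<Rightarrow> 'a cube \<Rightarrow> 'a cube" where
  "local_twist \<phi> \<gamma> \<kappa> = (if \<kappa> \<in> brick \<phi> then twist \<phi> \<phi> \<gamma> \<kappa> else \<kappa>)"

lemma brick_psi_s: "\<kappa> \<in> brick (psi_s s) \<longleftrightarrow> \<kappa> s 0"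
  by (simp add: brick_def psi_s_def is_prefix_def)

lemma iota1_eq_local_twist: "iota1 s \<gamma> = local_twist (psi_s s) \<gamma>"
  by (auto simp: iota1_def local_twist_def twist_def brick_psi_s)

lemma local_twist_conj:
  assumes "bij f" "bij \<gamma>" "\<And>\<kappa>. \<kappa> \<in> brick \<phi> \<Longrightarrow> f \<kappa> = twist \<phi> \<psi> id \<kappa>"
  shows "local_twist \<psi> \<gamma> = f \<circ> local_twist \<phi> \<gamma> \<circ> inv_fun f"
proof
  fix y
  obtain \<kappa> where y: "y = f \<kappa>"
    using assms(1) by (metis bij_pointE)
  have "local_twist \<psi> \<gamma> (f \<kappa>) = f (local_twist \<phi> \<gamma> \<kappa>)"
  proof (cases "\<kappa> \<in> brick \<phi>")
    case True
    then have "local_twist \<psi> \<gamma> (f \<kappa>) = twist \<phi> \<psi> (\<gamma> \<circ> id) \<kappa>"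
      using assms(2,3) by (simp add: local_twist_def twist_in_brick twist_twist)
    also have "\<dots> = f (local_twist \<phi> \<gamma> \<kappa>)"
      using True assms(2,3) by (simp add: local_twist_def twist_in_brick twist_twist)
    finally show ?thesis .
  next
    case False
    have "f ` brick \<phi> = brick \<psi>"
      using assms(3) image_twist[of id \<phi> \<psi>] by (simp cong: image_cong)
    then have "f \<kappa> \<notin> brick \<psi>"
      using False assms(1) by (metis bij_is_inj image_iff inj_eq)
    then show ?thesis
      using False by (simp add: local_twist_def)
  qed
  then show "local_twist \<psi> \<gamma> y = (f \<circ> local_twist \<phi> \<gamma> \<circ> inv_fun f) y"
    using assms(1) by (simp add: y bij_is_inj)
qed

lemma
  assumes "subgroup G (BijGroup UNIV)"
  shows iota1_in_SVG: "\<gamma> \<in> G \<Longrightarrow> iota1 s \<gamma> \<in> SVG G"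
    and SV_subset_SVG: "SV \<subseteq> SVG G"
proof -
  note G = subgroup_BijGroup_UNIV_bij[OF assms] subgroup_BijGroup_UNIV_id[OF assms]
  show "SV \<subseteq> SVG G"
    unfolding SV_def by (rule SVG_mono) (simp add: G(2))
  assume "\<gamma> \<in> G"
  have agree: "iota1 s \<gamma> \<kappa> = twist (comb_label s 1 k) (comb_label s 1 k) (if k = 0 then \<gamma> else id) \<kappa>"
    if "k < 2" "\<kappa> \<in> brick (comb_label s 1 k)" for k \<kappa>
  proof (cases "k = 0")
    case True
    then show ?thesis
      using that(2) by (simp add: comb_label_0 iota1_eq_local_twist local_twist_def)
  next
    case False
    then have "k = 1"
      using that(1) by simp
    then have "\<not> \<kappa> s 0"
      using that(2) by (simp add: brick_comb_label)
    then show ?thesis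
      using False twist_self_id[OF that(2)] by (simp add: iota1_def)
  qed
  show "iota1 s \<gamma> \<in> SVG G"
    by (rule in_SVG_if_pieces[OF G(1) brick_partition_comb_label_1 brick_partition_comb_label_1 _ agree]) (use G(2) \<open>\<gamma> \<in> G\<close> in auto)
qed

lemma generate_SV_iota1_subset_SVG:
  assumes "subgroup G (BijGroup UNIV)"
  shows "generate (BijGroup UNIV) (SV \<union> iota1 s ` G) \<subseteq> SVG G"
  using iota1_in_SVG[OF assms] SV_subset_SVG[OF assms]
  by (intro group.generate_subgroup_incl[OF group_BijGroup] subgroup_SVG[OF assms]) auto

lemma subgroup_generate_SV_iota1:
  assumes "subgroup G (BijGroup UNIV)"
  shows "subgroup (generate (BijGroup UNIV) (SV \<union> iota1 s ` G)) (BijGroup UNIV)"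
  using iota1_in_SVG[OF assms] SV_subset_SVG[OF assms] subgroup.subset[OF subgroup_SVG[OF assms]]
  by (intro group.generate_is_subgroup[OF group_BijGroup]) blast

lemma local_twist_in_generate:
  assumes "subgroup G (BijGroup UNIV)" "brick_partition \<theta> n" "2 \<le> n" "i < n" "\<gamma> \<in> G"
  shows "local_twist (\<theta> i) \<gamma> \<in> generate (BijGroup UNIV) (SV \<union> iota1 s ` G)"
proof -
  define m where "m = n - 1"
  have n: "n = Suc m" "0 < m"
    using assms(3) by (auto simp: m_def)
  define \<beta> where "\<beta> = \<theta> \<circ> Transposition.transpose 0 i"
  have swap: "bij_betw (Transposition.transpose 0 i) {..<n} {..<n}"
    using assms(4) n by simp
  have "partitions_cube \<beta> {..<n} \<longleftrightarrow> partitions_cube \<theta> {..<n}"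
    by (rule partitions_cube_reindex[OF swap]) (simp add: \<beta>_def)
  moreover have "fin_supp (\<beta> k)" if "k < n" for k
    using assms(2) bij_betw_apply[OF swap] that by (simp add: \<beta>_def brick_partition_iff)
  ultimately have "brick_partition \<beta> n"
    using assms(2) by (simp add: brick_partition_iff)
  moreover have comb: "brick_partition (comb_label s m) n"
    using brick_partition_comb_label n(1) by simp
  moreover define f where "f = glue (pieces_of (comb_label s m) \<beta> (\<lambda>_. id) n)"
  ultimately have "f \<in> SV"
    unfolding SV_def f_def
    by (intro in_SVG_if_pieces[OF _ comb \<open>brick_partition \<beta> n\<close>]) (simp_all add: glue_pieces_of[OF comb])
  then have "bij f"
    using subgroup_BijGroup_UNIV_bij[OF subgroup_SVG[OF assms(1)]] SV_subset_SVG[OF assms(1)] by (meson subsetD)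
  have "f \<kappa> = twist (psi_s s) (\<theta> i) id \<kappa>" if "\<kappa> \<in> brick (psi_s s)" for \<kappa>
    using glue_pieces_of[OF comb, of 0 \<kappa> \<beta> "\<lambda>_. id"] that n by (simp add: f_def \<beta>_def comb_label_0)
  then have "local_twist (\<theta> i) \<gamma> = f \<circ> iota1 s \<gamma> \<circ> inv_fun f"
    using local_twist_conj[OF \<open>bij f\<close>] subgroup_BijGroup_UNIV_bij[OF assms(1) assms(5)]
    by (simp add: iota1_eq_local_twist)
  moreover note gen = subgroup_generate_SV_iota1[OF assms(1), of s]
  have "f \<in> generate (BijGroup UNIV) (SV \<union> iota1 s ` G)" "iota1 s \<gamma> \<in> generate (BijGroup UNIV) (SV \<union> iota1 s ` G)"
    using \<open>f \<in> SV\<close> assms(5) by (auto intro: generate.incl)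
  ultimately show ?thesis
    using subgroup_BijGroup_UNIV_comp[OF gen] subgroup_BijGroup_UNIV_inv[OF gen] by simp
qed

fun local_twists :: "(nat \<Rightarrow> 'a \<Rightarrow> bool list) \<Rightarrow> (nat \<Rightarrow> 'a \<Rightarrow> 'a) \<Rightarrow> nat \<Rightarrow> 'a cube \<Rightarrow> 'a cube" where
  "local_twists \<phi> \<gamma> 0 = id"
| "local_twists \<phi> \<gamma> (Suc k) = local_twists \<phi> \<gamma> k \<circ> local_twist (\<phi> k) (\<gamma> k)"

lemma local_twists_apply:
  assumes "partitions_cube \<phi> {..<n}" "j < n"
  shows "k \<le> n \<Longrightarrow> \<kappa> \<in> brick (\<phi> j) \<Longrightarrow>
    local_twists \<phi> \<gamma> k \<kappa> = (if j < k then twist (\<phi> j) (\<phi> j) (\<gamma> j) \<kappa> else \<kappa>)"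
proof (induction k arbitrary: \<kappa>)
  case (Suc k)
  show ?case
  proof (cases "j = k")
    case True
    then show ?thesis
      using Suc by (simp add: local_twist_def twist_in_brick)
  next
    case False
    have "k < n"
      using Suc.prems(1) by simp
    then have "\<kappa> \<notin> brick (\<phi> k)"
      using partitions_cube_unique[OF assms(1), of j k \<kappa>] assms(2) Suc.prems(2) False by auto
    then show ?thesis
      using Suc False by (simp add: local_twist_def)
  qed
qed simp

lemma local_twists_in_generate:
  assumes "subgroup G (BijGroup UNIV)" "brick_partition \<phi> n" "2 \<le> n" "\<And>i. i < n \<Longrightarrow> \<gamma> i \<in> G"
  shows "local_twists \<phi> \<gamma> n \<in> generate (BijGroup UNIV) (SV \<union> iota1 s ` G)"
proof -
  note gen = subgroup_generate_SV_iota1[OF assms(1), of s]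
  have "k \<le> n \<Longrightarrow> local_twists \<phi> \<gamma> k \<in> generate (BijGroup UNIV) (SV \<union> iota1 s ` G)" for k
  proof (induction k)
    case (Suc k)
    then have "local_twist (\<phi> k) (\<gamma> k) \<in> generate (BijGroup UNIV) (SV \<union> iota1 s ` G)"
      using local_twist_in_generate[OF assms(1-3)] assms(4) by simp
    then show ?case
      unfolding local_twists.simps(2) using Suc by (intro subgroup_BijGroup_UNIV_comp[OF gen]) simp_all
  qed (simp add: subgroup_BijGroup_UNIV_id[OF gen])
  then show ?thesis
    by simp
qed

lemma SVG_eq_comp_local_twists:
  assumes "brick_partition \<phi> n" "brick_partition \<psi> n" "\<And>i. i < n \<Longrightarrow> bij (\<gamma> i)"
    and "\<And>i \<kappa>. i < n \<Longrightarrow> \<kappa> \<in> brick (\<phi> i) \<Longrightarrow> h \<kappa> = twist (\<phi> i) (\<psi> i) (\<gamma> i) \<kappa>"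
  shows "h = glue (pieces_of \<phi> \<psi> (\<lambda>_. id) n) \<circ> local_twists \<phi> \<gamma> n"
proof
  fix \<kappa>
  have "partitions_cube \<phi> {..<n}"
    using assms(1) by (simp add: brick_partition_iff)
  then obtain j where j: "j < n" "\<kappa> \<in> brick (\<phi> j)"
    by (auto elim: partitions_cube_cover)
  then have "local_twists \<phi> \<gamma> n \<kappa> = twist (\<phi> j) (\<phi> j) (\<gamma> j) \<kappa>"
    using local_twists_apply[of \<phi> n j n \<kappa>] assms(1) by (simp add: brick_partition_iff)
  then have "glue (pieces_of \<phi> \<psi> (\<lambda>_. id) n) (local_twists \<phi> \<gamma> n \<kappa>) = twist (\<phi> j) (\<psi> j) (id \<circ> \<gamma> j) \<kappa>"
    using glue_pieces_of[OF assms(1) j(1)] assms(3)[OF j(1)] by (simp add: twist_in_brick twist_twist)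
  then show "h \<kappa> = (glue (pieces_of \<phi> \<psi> (\<lambda>_. id) n) \<circ> local_twists \<phi> \<gamma> n) \<kappa>"
    using assms(4)[OF j] by simp
qed

lemma split_single_piece:
  assumes "bij h" "bij \<gamma>" "brick_partition \<phi> 1" "fin_supp \<psi>"
    and "\<And>\<kappa>. \<kappa> \<in> brick (\<phi> 0) \<Longrightarrow> h \<kappa> = twist (\<phi> 0) \<psi> \<gamma> \<kappa>"
  obtains \<psi>' where "brick_partition \<psi>' 2"
    "\<And>i \<kappa>. i < 2 \<Longrightarrow> \<kappa> \<in> brick (comb_label s 1 i) \<Longrightarrow> h \<kappa> = twist (comb_label s 1 i) (\<psi>' i) \<gamma> \<kappa>"
proof -
  define \<psi>' where "\<psi>' i = twist_label (\<phi> 0) \<psi> \<gamma> (comb_label s 1 i)" for i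
  have "brick (\<phi> 0) = UNIV"
    using assms(3) by (simp add: brick_partition_def lessThan_Suc)
  then have "prefix (\<phi> 0 u) (comb_label s 1 i u)" for i u
    using brick_eq_UNIV_imp_Nil[of "\<phi> 0" u] by simp
  then have h: "h \<kappa> = twist (comb_label s 1 i) (\<psi>' i) \<gamma> \<kappa>" if "\<kappa> \<in> brick (comb_label s 1 i)" for i \<kappa>
    using assms(5) twist_refine[of "\<phi> 0" "comb_label s 1 i", OF _ that] \<open>brick (\<phi> 0) = UNIV\<close>
    by (simp add: \<psi>'_def)
  have "partitions_cube (comb_label s 1) {..<2}"
    using brick_partition_comb_label_1[of s] by (simp add: brick_partition_iff)
  moreover have "h ` brick (comb_label s 1 i) = brick (\<psi>' i)" for i
    using h image_twist[OF assms(2)] by (simp cong: image_cong)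
  ultimately have "partitions_cube \<psi>' {..<2}"
    by (rule partitions_cube_image[OF assms(1)])
  moreover have "fin_supp (\<psi>' i)" for i
    using fin_supp_twist_label[OF assms(4) _ assms(2)]
    by (simp add: \<psi>'_def comb_label_def fin_supp_coord_label)
  ultimately have "brick_partition \<psi>' 2"
    by (simp add: brick_partition_iff)
  then show thesis
    by (rule that) (rule h)
qed

lemma SVG_obtain_pieces_ge2:
  assumes "\<And>\<gamma>. \<gamma> \<in> G \<Longrightarrow> bij \<gamma>" "h \<in> SVG G"
  obtains n \<phi> \<psi> \<gamma> where "2 \<le> n" "brick_partition \<phi> n" "brick_partition \<psi> n" "\<And>i. i < n \<Longrightarrow> \<gamma> i \<in> G"
    "\<And>i \<kappa>. i < n \<Longrightarrow> \<kappa> \<in> brick (\<phi> i) \<Longrightarrow> h \<kappa> = twist (\<phi> i) (\<psi> i) (\<gamma> i) \<kappa>"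
proof -
  obtain n \<phi> \<psi> \<gamma> where hom: "homeomorphic_map cube_top cube_top h"
    and bp: "brick_partition \<phi> n" "brick_partition \<psi> n" and G: "\<forall>i<n. \<gamma> i \<in> G"
    and h: "\<forall>i<n. \<forall>\<kappa>\<in>brick (\<phi> i). h \<kappa> = twist (\<phi> i) (\<psi> i) (\<gamma> i) \<kappa>"
    using assms(2) unfolding SVG_def by blast
  show thesis
  proof (cases "2 \<le> n")
    case True
    then show thesis
      using that bp G h by blast
  next
    case False
    moreover have "n \<noteq> 0"
      using bp(1) by (auto simp: brick_partition_def)
    ultimately have n: "n = 1"
      by simp
    have "bij (\<gamma> 0)" "brick_partition \<phi> 1" "fin_supp (\<psi> 0)"
      using assms(1) G bp n by (simp_all add: brick_partition_def)
    moreover have "\<And>\<kappa>. \<kappa> \<in> brick (\<phi> 0) \<Longrightarrow> h \<kappa> = twist (\<phi> 0) (\<psi> 0) (\<gamma> 0) \<kappa>"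
      using h n by simp
    txt \<open>Any coordinate can be used to split the single brick.\<close>
    ultimately obtain \<psi>' where \<psi>': "brick_partition \<psi>' 2"
      "\<And>i \<kappa>. i < 2 \<Longrightarrow> \<kappa> \<in> brick (comb_label undefined 1 i) \<Longrightarrow>
        h \<kappa> = twist (comb_label undefined 1 i) (\<psi>' i) (\<gamma> 0) \<kappa>"
      using split_single_piece[where s = undefined, OF bij_if_homeomorphic_map_cube[OF hom]] by blast
    then show thesis
      using brick_partition_comb_label_1 G n by (intro that[of 2 "comb_label undefined 1" \<psi>' "\<lambda>_. \<gamma> 0"]) simp_all
  qed
qed

lemma SVG_subset_generate_SV_iota1:
  assumes "subgroup G (BijGroup UNIV)"
  shows "SVG G \<subseteq> generate (BijGroup UNIV) (SV \<union> iota1 s ` G)"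
proof
  note G = subgroup_BijGroup_UNIV_bij[OF assms]
  note gen = subgroup_generate_SV_iota1[OF assms, of s]
  fix h assume "h \<in> SVG G"
  then obtain n \<phi> \<psi> \<gamma> where n: "2 \<le> n" and bp: "brick_partition \<phi> n" "brick_partition \<psi> n"
    and \<gamma>: "\<And>i. i < n \<Longrightarrow> \<gamma> i \<in> G"
    and h: "\<And>i \<kappa>. i < n \<Longrightarrow> \<kappa> \<in> brick (\<phi> i) \<Longrightarrow> h \<kappa> = twist (\<phi> i) (\<psi> i) (\<gamma> i) \<kappa>"
    using SVG_obtain_pieces_ge2[OF G] by metis
  have "glue (pieces_of \<phi> \<psi> (\<lambda>_. id) n) \<in> SV"
    unfolding SV_def by (intro in_SVG_if_pieces[OF _ bp]) (simp_all add: glue_pieces_of[OF bp(1)])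
  then have "glue (pieces_of \<phi> \<psi> (\<lambda>_. id) n) \<in> generate (BijGroup UNIV) (SV \<union> iota1 s ` G)"
    by (auto intro: generate.incl)
  moreover have "local_twists \<phi> \<gamma> n \<in> generate (BijGroup UNIV) (SV \<union> iota1 s ` G)"
    by (rule local_twists_in_generate[OF assms bp(1) n \<gamma>])
  moreover have "h = glue (pieces_of \<phi> \<psi> (\<lambda>_. id) n) \<circ> local_twists \<phi> \<gamma> n"
    using bp G \<gamma> h by (intro SVG_eq_comp_local_twists) auto
  ultimately show "h \<in> generate (BijGroup UNIV) (SV \<union> iota1 s ` G)"
    using subgroup_BijGroup_UNIV_comp[OF gen] by simp
qed

theorem proposition3p1:
  fixes G :: "('a \<Rightarrow> 'a) set" and s :: 'a
  assumes "subgroup G (BijGroup (UNIV :: 'a set))"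
  shows "SVG G = generate (BijGroup (UNIV :: (('a \<Rightarrow> nat \<Rightarrow> bool) set)))
                   (SV \<union> iota1 s ` G)"
  using SVG_subset_generate_SV_iota1[OF assms] generate_SV_iota1_subset_SVG[OF assms] by (rule equalityI)

end
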